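(* Let $R$ be a hyperring such that $X=\operatorname{Spec}R$ is irreducible, and let $S$, $K$, $\mathcal{F}_X$ be as in the context. Then for every $f\in S$ there is a canonical injective strict homomorphism of hyperrings $R_f\to\mathcal{F}_X(D(f))$, $\frac{a}{f^n}\mapsto\frac{a}{f^n}$; in particular (taking $f=1$) $R$ is a sub-hyperring of $\mathcal{F}_X(X)$ via $a\mapsto\frac a1$. Furthermore, if $R$ has a unique maximal hyperideal, then $R\cong\mathcal{F}_X(X)$.
   Context: Hyperring: a set with a hyperoperation $+:R\times R\to\mathcal{P}^*(R)$ (nonempty subsets; extended to subsets by $A+B=\bigcup a+b$) making $(R,+,0)$ a canonical hypergroup (commutative, associative, unique $0$ with $0+x=\{x\}$, unique $-x$ with $0\in x+(-x)$, and $x\in y+z\iff z\in x+(-y)$), and a commutative monoid $(R,\cdot,1)$, with $x(y+z)=xy+xz$, $0x=0$, $0\neq1$. Homomorphisms satisfy $\varphi(a+b)\subseteq\varphi(a)+\varphi(b)$, $\varphi(ab)=\varphi(a)\varphi(b)$; strict means equality for sums. Hyperideals: nonempty $I$ with $a-rb\subseteq I$ for $a,b\in I$, $r\in R$; prime/maximal as usual; $\operatorname{Spec}R$ has the Zariski topology, $D(f)=\{\mathfrak{p}\mid f\notin\mathfrak{p}\}$. $S$ is the set of non-zero-divisors of $R$; for a multiplicative submonoid $T$, $T^{-1}R$ is $R\times T$ modulo $(r_1,t_1)\sim(r_2,t_2)\iff xr_1t_2=xr_2t_1$ for some $x\in T$, with $\frac{r_1}{t_1}+\frac{r_2}{t_2}=\{\frac{y}{t_1t_2}\mid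 y\in r_1t_2+t_1r_2\}$ and componentwise multiplication; $K=S^{-1}R$, $R_f=\{1,f,f^2,\dots\}^{-1}R$. For open $U\subseteq X$, $\mathcal{F}_X(U)=\{u\in K\mid\forall\mathfrak{p}\in U,\ u=\frac ab\text{ with }a\in R,\ b\in S\setminus\mathfrak{p}\}$, a sub-hyperring of $K$. *)

theory Defs
  imports Main
begin

record 'a hyperring =
  carrier :: "'a set"
  hadd    :: "'a \<Rightarrow> 'a \<Rightarrow> 'a set"
  hzero   :: 'a
  hmult   :: "'a \<Rightarrow> 'a \<Rightarrow> 'a"
  hone    :: 'a

definition hsum :: "('a, 'b) hyperring_scheme \<Rightarrow> 'a set \<Rightarrow> 'a set \<Rightarrow> 'a set" where
  "hsum R A B = (\<Union>a\<in>A. \<Union>b\<in>B. hadd R a b)"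

definition hneg :: "('a, 'b) hyperring_scheme \<Rightarrow> 'a \<Rightarrow> 'a" where
  "hneg R x = (THE y. y \<in> carrier R \<and> hzero R \<in> hadd R x y)"

definition hyperring :: "('a, 'b) hyperring_scheme \<Rightarrow> bool" where
  "hyperring R \<longleftrightarrow>
     \<comment> \<open>hyperaddition takes values in nonempty subsets\<close>
     (\<forall>a\<in>carrier R. \<forall>b\<in>carrier R. hadd R a b \<subseteq> carrier R \<and> hadd R a b \<noteq> {}) \<and>
     \<comment> \<open>commutativity and associativity\<close>
     (\<forall>a\<in>carrier R. \<forall>b\<in>carrier R. hadd R a b = hadd R b a) \<and>
     (\<forall>a\<in>carrier R. \<forall>b\<in>carrier R. \<forall>c\<in>carrier R.
        hsum R (hadd R a b) {c} = hsum R {a} (hadd R b c)) \<and>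
     \<comment> \<open>unique neutral element 0\<close>
     hzero R \<in> carrier R \<and>
     (\<forall>x\<in>carrier R. hadd R (hzero R) x = {x}) \<and>
     (\<forall>e\<in>carrier R. (\<forall>x\<in>carrier R. hadd R e x = {x}) \<longrightarrow> e = hzero R) \<and>
     \<comment> \<open>unique inverses\<close>
     (\<forall>x\<in>carrier R. \<exists>!y. y \<in> carrier R \<and> hzero R \<in> hadd R x y) \<and>
     \<comment> \<open>reversibility\<close>
     (\<forall>x\<in>carrier R. \<forall>y\<in>carrier R. \<forall>z\<in>carrier R.
        x \<in> hadd R y z \<longleftrightarrow> z \<in> hadd R x (hneg R y)) \<and>
     \<comment> \<open>commutative multiplicative monoid\<close>
     (\<forall>a\<in>carrier R. \<forall>b\<in>carrier R. hmult R a b \<in> carrier R) \<and>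
     (\<forall>a\<in>carrier R. \<forall>b\<in>carrier R. \<forall>c\<in>carrier R.
        hmult R (hmult R a b) c = hmult R a (hmult R b c)) \<and>
     (\<forall>a\<in>carrier R. \<forall>b\<in>carrier R. hmult R a b = hmult R b a) \<and>
     hone R \<in> carrier R \<and>
     (\<forall>a\<in>carrier R. hmult R (hone R) a = a) \<and>
     \<comment> \<open>distributivity, absorbing zero, 0 \<noteq> 1\<close>
     (\<forall>x\<in>carrier R. \<forall>y\<in>carrier R. \<forall>z\<in>carrier R.
        hmult R x ` hadd R y z = hadd R (hmult R x y) (hmult R x z)) \<and>
     (\<forall>x\<in>carrier R. hmult R (hzero R) x = hzero R) \<and>
     hzero R \<noteq> hone R"

definition hyperring_hom ::
  "('a, 'c) hyperring_scheme \<Rightarrow> ('b, 'd) hyperring_scheme \<Rightarrow> ('a \<Rightarrow> 'b) \<Rightarrow> bool" where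
  "hyperring_hom R S \<phi> \<longleftrightarrow>
     (\<forall>a\<in>carrier R. \<phi> a \<in> carrier S) \<and>
     (\<forall>a\<in>carrier R. \<forall>b\<in>carrier R. \<phi> ` hadd R a b \<subseteq> hadd S (\<phi> a) (\<phi> b)) \<and>
     (\<forall>a\<in>carrier R. \<forall>b\<in>carrier R. \<phi> (hmult R a b) = hmult S (\<phi> a) (\<phi> b))"

definition strict_hom ::
  "('a, 'c) hyperring_scheme \<Rightarrow> ('b, 'd) hyperring_scheme \<Rightarrow> ('a \<Rightarrow> 'b) \<Rightarrow> bool" where
  "strict_hom R S \<phi> \<longleftrightarrow> hyperring_hom R S \<phi> \<and>
     (\<forall>a\<in>carrier R. \<forall>b\<in>carrier R. \<phi> ` hadd R a b = hadd S (\<phi> a) (\<phi> b))"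

definition hyperring_iso ::
  "('a, 'c) hyperring_scheme \<Rightarrow> ('b, 'd) hyperring_scheme \<Rightarrow> ('a \<Rightarrow> 'b) \<Rightarrow> bool" where
  "hyperring_iso R S \<phi> \<longleftrightarrow> strict_hom R S \<phi> \<and> bij_betw \<phi> (carrier R) (carrier S) \<and>
     strict_hom S R (inv_into (carrier R) \<phi>)"

definition hyperideal :: "('a, 'b) hyperring_scheme \<Rightarrow> 'a set \<Rightarrow> bool" where
  "hyperideal R I \<longleftrightarrow> I \<subseteq> carrier R \<and> I \<noteq> {} \<and>
     (\<forall>a\<in>I. \<forall>b\<in>I. \<forall>r\<in>carrier R. hadd R a (hneg R (hmult R r b)) \<subseteq> I)"

definition prime_hyperideal :: "('a, 'b) hyperring_scheme \<Rightarrow> 'a set \<Rightarrow> bool" where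
  "prime_hyperideal R P \<longleftrightarrow> hyperideal R P \<and> P \<noteq> carrier R \<and>
     (\<forall>a\<in>carrier R. \<forall>b\<in>carrier R. hmult R a b \<in> P \<longrightarrow> a \<in> P \<or> b \<in> P)"

definition maximal_hyperideal :: "('a, 'b) hyperring_scheme \<Rightarrow> 'a set \<Rightarrow> bool" where
  "maximal_hyperideal R M \<longleftrightarrow> hyperideal R M \<and> M \<noteq> carrier R \<and>
     (\<forall>J. hyperideal R J \<and> M \<subseteq> J \<longrightarrow> J = M \<or> J = carrier R)"

definition Spec :: "('a, 'b) hyperring_scheme \<Rightarrow> 'a set set" where
  "Spec R = {P. prime_hyperideal R P}"

definition zariski_V :: "('a, 'b) hyperring_scheme \<Rightarrow> 'a set \<Rightarrow> 'a set set" where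
  "zariski_V R E = {P \<in> Spec R. E \<subseteq> P}"

definition zariski_D :: "('a, 'b) hyperring_scheme \<Rightarrow> 'a \<Rightarrow> 'a set set" where
  "zariski_D R f = {P \<in> Spec R. f \<notin> P}"

definition irreducible_Spec :: "('a, 'b) hyperring_scheme \<Rightarrow> bool" where
  "irreducible_Spec R \<longleftrightarrow> Spec R \<noteq> {} \<and>
     (\<forall>E1 E2. E1 \<subseteq> carrier R \<and> E2 \<subseteq> carrier R \<and>
        zariski_V R E1 \<union> zariski_V R E2 = Spec R \<longrightarrow>
        zariski_V R E1 = Spec R \<or> zariski_V R E2 = Spec R)"

definition hpow :: "('a, 'b) hyperring_scheme \<Rightarrow> 'a \<Rightarrow> nat \<Rightarrow> 'a" where
  "hpow R f n = (hmult R f ^^ n) (hone R)"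

definition powers :: "('a, 'b) hyperring_scheme \<Rightarrow> 'a \<Rightarrow> 'a set" where
  "powers R f = range (hpow R f)"

definition nzd :: "('a, 'b) hyperring_scheme \<Rightarrow> 'a set" where
  "nzd R = {s \<in> carrier R. \<forall>x\<in>carrier R. hmult R s x = hzero R \<longrightarrow> x = hzero R}"

definition locrel :: "('a, 'b) hyperring_scheme \<Rightarrow> 'a set \<Rightarrow> (('a \<times> 'a) \<times> ('a \<times> 'a)) set" where
  "locrel R T = {((r1, t1), (r2, t2)). r1 \<in> carrier R \<and> r2 \<in> carrier R \<and> t1 \<in> T \<and> t2 \<in> T \<and>
      (\<exists>x\<in>T. hmult R x (hmult R r1 t2) = hmult R x (hmult R r2 t1))}"

definition frac :: "('a, 'b) hyperring_scheme \<Rightarrow> 'a set \<Rightarrow> 'a \<Rightarrow> 'a \<Rightarrow> ('a \<times> 'a) set" where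
  "frac R T r t = locrel R T `` {(r, t)}"

definition loc :: "('a, 'b) hyperring_scheme \<Rightarrow> 'a set \<Rightarrow> ('a \<times> 'a) set hyperring" where
  "loc R T = \<lparr>
     carrier = (carrier R \<times> T) // locrel R T,
     hadd = (\<lambda>A B. {frac R T y (hmult R t1 t2) | y r1 t1 r2 t2.
                      (r1, t1) \<in> A \<and> (r2, t2) \<in> B \<and>
                      y \<in> hadd R (hmult R r1 t2) (hmult R t1 r2)}),
     hzero = frac R T (hzero R) (hone R),
     hmult = (\<lambda>A B. let (r1, t1) = (SOME p. p \<in> A); (r2, t2) = (SOME p. p \<in> B)
                    in frac R T (hmult R r1 r2) (hmult R t1 t2)),
     hone = frac R T (hone R) (hone R) \<rparr>"

definition total_frac :: "('a, 'b) hyperring_scheme \<Rightarrow> ('a \<times> 'a) set hyperring" where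
  "total_frac R = loc R (nzd R)"

definition loc_at :: "('a, 'b) hyperring_scheme \<Rightarrow> 'a \<Rightarrow> ('a \<times> 'a) set hyperring" where
  "loc_at R f = loc R (powers R f)"

definition sections_set :: "('a, 'b) hyperring_scheme \<Rightarrow> 'a set set \<Rightarrow> ('a \<times> 'a) set set" where
  "sections_set R U = {u \<in> carrier (total_frac R). \<forall>P\<in>U.
      \<exists>a\<in>carrier R. \<exists>b\<in>nzd R - P. u = frac R (nzd R) a b}"

definition sections :: "('a, 'b) hyperring_scheme \<Rightarrow> 'a set set \<Rightarrow> ('a \<times> 'a) set hyperring" where
  "sections R U = (total_frac R)\<lparr>carrier := sections_set R U\<rparr>"

end

theory Submission imports Defs begin

text \<open>
  Every denominator occurring here (powers of a non-zero-divisor f, or elements of S) is a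
  non-zero-divisor, so the canonical maps R \<rightarrow> K and R_f \<rightarrow> K are injective strict
  homomorphisms; their images consist of fractions whose denominators avoid every prime of the
  relevant open set, i.e.\ they land in the sections.  If R has a unique maximal hyperideal m, then
  m is exactly the set of non-units, hence prime; a global section has, at the point m, a
  representative a/b with b \<notin> m, so b is a unit and the section is (a b^-1)/1.  Thus
  R \<rightarrow> F_X(X) is onto, and a bijective strict homomorphism has a strict inverse.
\<close>

locale hring =
  fixes R :: "('a, 'b) hyperring_scheme"
  assumes hadd_closed: "a \<in> carrier R \<Longrightarrow> b \<in> carrier R \<Longrightarrow> hadd R a b \<subseteq> carrier R"
    and hadd_commute: "a \<in> carrier R \<Longrightarrow> b \<in> carrier R \<Longrightarrow> hadd R a b = hadd R b a"
    and zero_closed [simp]: "hzero R \<in> carrier R"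
    and zero_hadd: "x \<in> carrier R \<Longrightarrow> hadd R (hzero R) x = {x}"
    and neg_ex1: "x \<in> carrier R \<Longrightarrow> \<exists>!y. y \<in> carrier R \<and> hzero R \<in> hadd R x y"
    and mult_closed [simp]: "a \<in> carrier R \<Longrightarrow> b \<in> carrier R \<Longrightarrow> hmult R a b \<in> carrier R"
    and mult_assoc:
      "a \<in> carrier R \<Longrightarrow> b \<in> carrier R \<Longrightarrow> c \<in> carrier R \<Longrightarrow>
       hmult R (hmult R a b) c = hmult R a (hmult R b c)"
    and mult_commute: "a \<in> carrier R \<Longrightarrow> b \<in> carrier R \<Longrightarrow> hmult R a b = hmult R b a"
    and one_closed [simp]: "hone R \<in> carrier R"
    and one_mult [simp]: "a \<in> carrier R \<Longrightarrow> hmult R (hone R) a = a"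
    and mult_hadd_distrib:
      "x \<in> carrier R \<Longrightarrow> y \<in> carrier R \<Longrightarrow> z \<in> carrier R \<Longrightarrow>
       hmult R x ` hadd R y z = hadd R (hmult R x y) (hmult R x z)"
    and zero_mult [simp]: "x \<in> carrier R \<Longrightarrow> hmult R (hzero R) x = hzero R"

lemma hring_if_hyperring: "hyperring R \<Longrightarrow> hring R"
  unfolding hyperring_def by unfold_locales (elim conjE; metis)+

context hring
begin

abbreviation mul (infixl "\<odot>" 70) where "x \<odot> y \<equiv> hmult R x y"

lemma mult_left_commute:
  "a \<in> carrier R \<Longrightarrow> b \<in> carrier R \<Longrightarrow> c \<in> carrier R \<Longrightarrow> a \<odot> (b \<odot> c) = b \<odot> (a \<odot> c)"
  by (metis mult_assoc mult_commute)

lemmas mult_ac = mult_assoc mult_commute mult_left_commute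

lemma mult_one [simp]: "a \<in> carrier R \<Longrightarrow> a \<odot> hone R = a"
  using one_mult mult_commute one_closed by metis

lemma mult_zero [simp]: "x \<in> carrier R \<Longrightarrow> x \<odot> hzero R = hzero R"
  using zero_mult mult_commute zero_closed by metis

lemma neg_closed [simp]: "x \<in> carrier R \<Longrightarrow> hneg R x \<in> carrier R"
  and zero_in_hadd_neg: "x \<in> carrier R \<Longrightarrow> hzero R \<in> hadd R x (hneg R x)"
  unfolding hneg_def using theI'[OF neg_ex1] by blast+

lemma neg_unique: "x \<in> carrier R \<Longrightarrow> y \<in> carrier R \<Longrightarrow> hzero R \<in> hadd R x y \<Longrightarrow> hneg R x = y"
  using neg_ex1 neg_closed zero_in_hadd_neg by blast

lemma neg_neg [simp]: "x \<in> carrier R \<Longrightarrow> hneg R (hneg R x) = x"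
  by (rule neg_unique) (auto simp: hadd_commute[of _ x] zero_in_hadd_neg)

lemma neg_mult_right:
  assumes "x \<in> carrier R" "y \<in> carrier R"
  shows "hneg R (x \<odot> y) = x \<odot> hneg R y"
proof (rule neg_unique)
  have "x \<odot> hzero R \<in> hmult R x ` hadd R y (hneg R y)"
    using zero_in_hadd_neg[OF assms(2)] by blast
  then show "hzero R \<in> hadd R (x \<odot> y) (x \<odot> hneg R y)"
    using assms mult_hadd_distrib[of x y "hneg R y"] by simp
qed (use assms in auto)

lemma nzd_carrier: "t \<in> nzd R \<Longrightarrow> t \<in> carrier R"
  unfolding nzd_def by blast

lemma one_nzd: "hone R \<in> nzd R"
  unfolding nzd_def by simp

lemma nzd_mult:
  assumes "s \<in> nzd R" "t \<in> nzd R"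
  shows "s \<odot> t \<in> nzd R"
  unfolding nzd_def
proof (intro CollectI conjI ballI impI)
  have C: "s \<in> carrier R" "t \<in> carrier R" using assms nzd_carrier by auto
  then show "s \<odot> t \<in> carrier R" by simp
  fix x assume x: "x \<in> carrier R" "s \<odot> t \<odot> x = hzero R"
  then have "t \<odot> x = hzero R" using assms(1) C unfolding nzd_def by (auto simp: mult_assoc)
  then show "x = hzero R" using assms(2) x unfolding nzd_def by auto
qed

text \<open>Cancellation needs a detour through additive inverses, as there is no subtraction.\<close>

lemma nzd_mult_cancel:
  assumes x: "x \<in> nzd R" and c: "c \<in> carrier R" and d: "d \<in> carrier R"
    and eq: "x \<odot> c = x \<odot> d"
  shows "c = d"
proof -
  have xC: "x \<in> carrier R" using x nzd_carrier by blast
  let ?n = "hneg R d"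
  have "x \<odot> hzero R \<in> hmult R x ` hadd R d ?n"
    using zero_in_hadd_neg[OF d] by blast
  also have "hmult R x ` hadd R d ?n = hadd R (x \<odot> d) (x \<odot> ?n)"
    using mult_hadd_distrib xC d by simp
  also have "\<dots> = hmult R x ` hadd R c ?n"
    using mult_hadd_distrib xC c d eq by simp
  finally obtain e where e: "e \<in> hadd R c ?n" "x \<odot> e = hzero R"
    using xC by auto
  have "e \<in> carrier R" using e(1) hadd_closed[of c ?n] c d by auto
  then have "e = hzero R" using x e(2) unfolding nzd_def by blast
  then have "hneg R c = ?n" using e(1) c d by (intro neg_unique) auto
  then show ?thesis using c d by (metis neg_neg)
qed

lemma hpow_0 [simp]: "hpow R f 0 = hone R"
  unfolding hpow_def by simp

lemma hpow_Suc: "hpow R f (Suc n) = f \<odot> hpow R f n"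
  unfolding hpow_def by simp

lemma hpow_closed [simp]: "f \<in> carrier R \<Longrightarrow> hpow R f n \<in> carrier R"
  by (induct n) (auto simp: hpow_Suc)

lemma hpow_add: "f \<in> carrier R \<Longrightarrow> hpow R f m \<odot> hpow R f n = hpow R f (m + n)"
  by (induct m) (auto simp: hpow_Suc mult_assoc)

lemma hpow_nzd: "f \<in> nzd R \<Longrightarrow> hpow R f n \<in> nzd R"
  by (induct n) (auto simp: hpow_Suc one_nzd nzd_mult)

lemma powers_subset_nzd: "f \<in> nzd R \<Longrightarrow> powers R f \<subseteq> nzd R"
  unfolding powers_def using hpow_nzd by auto

lemma hyperideal_zero:
  assumes "hyperideal R I"
  shows "hzero R \<in> I"
proof -
  obtain b where b: "b \<in> I" "b \<in> carrier R" using assms unfolding hyperideal_def by blast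
  have "hadd R b (hneg R (hone R \<odot> b)) \<subseteq> I"
    using assms b(1) one_closed unfolding hyperideal_def by blast
  then show ?thesis using zero_in_hadd_neg[of b] b by auto
qed

lemma hyperideal_neg_mult:
  assumes "hyperideal R I" "b \<in> I" "r \<in> carrier R"
  shows "hneg R (r \<odot> b) \<in> I"
proof -
  have "b \<in> carrier R" using assms unfolding hyperideal_def by blast
  moreover have "hadd R (hzero R) (hneg R (r \<odot> b)) \<subseteq> I"
    using assms hyperideal_zero[OF assms(1)] unfolding hyperideal_def by simp
  ultimately show ?thesis using zero_hadd assms(3) by simp
qed

lemma hyperideal_mult:
  assumes "hyperideal R I" "b \<in> I" "r \<in> carrier R"
  shows "r \<odot> b \<in> I"
proof -
  have "b \<in> carrier R" using assms unfolding hyperideal_def by blast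
  moreover have "hneg R (hone R \<odot> hneg R (r \<odot> b)) \<in> I"
    by (rule hyperideal_neg_mult[OF assms(1) hyperideal_neg_mult[OF assms]]) simp
  ultimately show ?thesis using assms(3) by simp
qed

lemma hyperideal_one_eq_carrier:
  assumes "hyperideal R I" "hone R \<in> I"
  shows "I = carrier R"
proof
  show "I \<subseteq> carrier R" using assms unfolding hyperideal_def by blast
  show "carrier R \<subseteq> I" using hyperideal_mult[OF assms] by (metis mult_one subsetI)
qed

lemma one_notin_prime: "prime_hyperideal R P \<Longrightarrow> hone R \<notin> P"
  using hyperideal_one_eq_carrier unfolding prime_hyperideal_def by blast

lemma hpow_notin_prime:
  assumes P: "prime_hyperideal R P" and f: "f \<in> carrier R" "f \<notin> P"
  shows "hpow R f n \<notin> P"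
proof (induct n)
  case 0
  show ?case using one_notin_prime[OF P] by simp
next
  case (Suc n)
  then show ?case
    using P f hpow_closed[OF f(1), of n] unfolding hpow_Suc prime_hyperideal_def by blast
qed

end

locale hring_submonoid = hring +
  fixes T
  assumes submonoid_carrier: "T \<subseteq> carrier R"
    and one_mem: "hone R \<in> T"
    and mult_mem: "s \<in> T \<Longrightarrow> t \<in> T \<Longrightarrow> s \<odot> t \<in> T"
begin

lemma mem_carrier [simp]: "t \<in> T \<Longrightarrow> t \<in> carrier R"
  using submonoid_carrier by blast

lemma locrelI:
  "r \<in> carrier R \<Longrightarrow> t \<in> T \<Longrightarrow> r' \<in> carrier R \<Longrightarrow> t' \<in> T \<Longrightarrow> x \<in> T \<Longrightarrow>
   x \<odot> (r \<odot> t') = x \<odot> (r' \<odot> t) \<Longrightarrow> ((r, t), (r', t')) \<in> locrel R T"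
  unfolding locrel_def by auto

lemma locrel_trans:
  assumes pq: "((r1, t1), (r2, t2)) \<in> locrel R T" and qr: "((r2, t2), (r3, t3)) \<in> locrel R T"
  shows "((r1, t1), (r3, t3)) \<in> locrel R T"
proof -
  from pq obtain x where x: "x \<in> T" "x \<odot> (r1 \<odot> t2) = x \<odot> (r2 \<odot> t1)"
    and m1: "r1 \<in> carrier R" "r2 \<in> carrier R" "t1 \<in> T" "t2 \<in> T"
    unfolding locrel_def by auto
  from qr obtain y where y: "y \<in> T" "y \<odot> (r2 \<odot> t3) = y \<odot> (r3 \<odot> t2)"
    and m2: "r3 \<in> carrier R" "t3 \<in> T"
    unfolding locrel_def by auto
  have "(x \<odot> y \<odot> t2) \<odot> (r1 \<odot> t3) = (y \<odot> t3) \<odot> (x \<odot> (r1 \<odot> t2))"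
    using x(1) y(1) m1 m2 by (simp add: mult_ac)
  also have "\<dots> = (y \<odot> t3) \<odot> (x \<odot> (r2 \<odot> t1))" using x(2) by simp
  also have "\<dots> = (x \<odot> t1) \<odot> (y \<odot> (r2 \<odot> t3))" using x(1) y(1) m1 m2 by (simp add: mult_ac)
  also have "\<dots> = (x \<odot> t1) \<odot> (y \<odot> (r3 \<odot> t2))" using y(2) by simp
  also have "\<dots> = (x \<odot> y \<odot> t2) \<odot> (r3 \<odot> t1)" using x(1) y(1) m1 m2 by (simp add: mult_ac)
  finally show ?thesis
    using x y m1 m2 mult_mem by (intro locrelI) auto
qed

lemma equiv_locrel: "equiv (carrier R \<times> T) (locrel R T)"
proof (rule equivI)
  show "locrel R T \<subseteq> (carrier R \<times> T) \<times> (carrier R \<times> T)" unfolding locrel_def by auto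
  show "refl_on (carrier R \<times> T) (locrel R T)" unfolding refl_on_def locrel_def using one_mem by auto
  show "sym (locrel R T)" unfolding sym_def locrel_def by clarsimp metis
  show "trans (locrel R T)" unfolding trans_def using locrel_trans by fast
qed

lemma locrel_sym: "(p, q) \<in> locrel R T \<Longrightarrow> (q, p) \<in> locrel R T"
  using equiv_locrel unfolding equiv_def sym_def by blast

lemma frac_eq_iff:
  "r \<in> carrier R \<Longrightarrow> t \<in> T \<Longrightarrow> r' \<in> carrier R \<Longrightarrow> t' \<in> T \<Longrightarrow>
   frac R T r t = frac R T r' t' \<longleftrightarrow> ((r, t), (r', t')) \<in> locrel R T"
  unfolding frac_def by (rule eq_equiv_class_iff[OF equiv_locrel]) auto

lemma self_in_frac: "r \<in> carrier R \<Longrightarrow> t \<in> T \<Longrightarrow> (r, t) \<in> frac R T r t"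
  unfolding frac_def using equiv_locrel unfolding equiv_def refl_on_def by auto

lemma locrel_of_mem_frac: "p \<in> frac R T r t \<Longrightarrow> ((r, t), p) \<in> locrel R T"
  unfolding frac_def by auto

lemma carrier_loc: "carrier (loc R T) = {frac R T r t | r t. r \<in> carrier R \<and> t \<in> T}"
  unfolding loc_def quotient_def frac_def by auto

lemma frac_in_carrier_loc: "r \<in> carrier R \<Longrightarrow> t \<in> T \<Longrightarrow> frac R T r t \<in> carrier (loc R T)"
  unfolding carrier_loc by blast

lemma locrel_mult:
  assumes "((a, s), (a', s')) \<in> locrel R T" "((b, u), (b', u')) \<in> locrel R T"
  shows "((a \<odot> b, s \<odot> u), (a' \<odot> b', s' \<odot> u')) \<in> locrel R T"
proof -
  from assms(1) obtain x where x: "x \<in> T" "x \<odot> (a \<odot> s') = x \<odot> (a' \<odot> s)"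
    and m1: "a \<in> carrier R" "a' \<in> carrier R" "s \<in> T" "s' \<in> T" unfolding locrel_def by auto
  from assms(2) obtain y where y: "y \<in> T" "y \<odot> (b \<odot> u') = y \<odot> (b' \<odot> u)"
    and m2: "b \<in> carrier R" "b' \<in> carrier R" "u \<in> T" "u' \<in> T" unfolding locrel_def by auto
  have "(x \<odot> y) \<odot> ((a \<odot> b) \<odot> (s' \<odot> u')) = (x \<odot> (a \<odot> s')) \<odot> (y \<odot> (b \<odot> u'))"
    using x(1) y(1) m1 m2 by (simp add: mult_ac)
  also have "\<dots> = (x \<odot> (a' \<odot> s)) \<odot> (y \<odot> (b' \<odot> u))" using x(2) y(2) by simp
  also have "\<dots> = (x \<odot> y) \<odot> ((a' \<odot> b') \<odot> (s \<odot> u))"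
    using x(1) y(1) m1 m2 by (simp add: mult_ac)
  finally show ?thesis using x y m1 m2 mult_mem by (intro locrelI) auto
qed

lemma hmult_loc_frac:
  assumes "r1 \<in> carrier R" "t1 \<in> T" "r2 \<in> carrier R" "t2 \<in> T"
  shows "hmult (loc R T) (frac R T r1 t1) (frac R T r2 t2) = frac R T (r1 \<odot> r2) (t1 \<odot> t2)"
proof -
  define p1 where "p1 = (SOME p. p \<in> frac R T r1 t1)"
  define p2 where "p2 = (SOME p. p \<in> frac R T r2 t2)"
  obtain a s b u where p: "p1 = (a, s)" "p2 = (b, u)" by (cases p1, cases p2)
  have "((r1, t1), p1) \<in> locrel R T" "((r2, t2), p2) \<in> locrel R T"
    unfolding p1_def p2_def using self_in_frac assms by (metis someI locrel_of_mem_frac)+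
  then have rel: "((r1 \<odot> r2, t1 \<odot> t2), (a \<odot> b, s \<odot> u)) \<in> locrel R T"
    using locrel_mult p by simp
  then have "a \<odot> b \<in> carrier R" "s \<odot> u \<in> T" unfolding locrel_def by auto
  then have "frac R T (a \<odot> b) (s \<odot> u) = frac R T (r1 \<odot> r2) (t1 \<odot> t2)"
    using rel assms mult_mem by (subst frac_eq_iff) (auto intro: locrel_sym)
  then show ?thesis
    unfolding loc_def using p unfolding p1_def p2_def by (simp add: Let_def)
qed

text \<open>Well-definedness of the hyperaddition of T^-1 R in the first summand.\<close>

lemma locrel_hadd:
  assumes rel: "((a, s), (a', s')) \<in> locrel R T" and b: "b \<in> carrier R" and u: "u \<in> T"
    and y: "y \<in> hadd R (a \<odot> u) (s \<odot> b)"
  shows "\<exists>y'\<in>hadd R (a' \<odot> u) (s' \<odot> b). ((y, s \<odot> u), (y', s' \<odot> u)) \<in> locrel R T"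
proof -
  from rel obtain x where x: "x \<in> T" "x \<odot> (a \<odot> s') = x \<odot> (a' \<odot> s)"
    and m: "a \<in> carrier R" "a' \<in> carrier R" "s \<in> T" "s' \<in> T" unfolding locrel_def by auto
  have yC: "y \<in> carrier R" using y hadd_closed[of "a \<odot> u" "s \<odot> b"] m b u by auto
  have "(x \<odot> s') \<odot> y \<in> hmult R (x \<odot> s') ` hadd R (a \<odot> u) (s \<odot> b)" using y by blast
  also have "\<dots> = hadd R ((x \<odot> s') \<odot> (a \<odot> u)) ((x \<odot> s') \<odot> (s \<odot> b))"
    using x m b u by (simp add: mult_hadd_distrib)
  also have "(x \<odot> s') \<odot> (a \<odot> u) = u \<odot> (x \<odot> (a \<odot> s'))" using x(1) m b u by (simp add: mult_ac)
  also have "\<dots> = u \<odot> (x \<odot> (a' \<odot> s))" using x(2) by simp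
  also have "\<dots> = (x \<odot> s) \<odot> (a' \<odot> u)" using x(1) m b u by (simp add: mult_ac)
  also have "(x \<odot> s') \<odot> (s \<odot> b) = (x \<odot> s) \<odot> (s' \<odot> b)" using x(1) m b u by (simp add: mult_ac)
  also have "hadd R ((x \<odot> s) \<odot> (a' \<odot> u)) ((x \<odot> s) \<odot> (s' \<odot> b)) =
      hmult R (x \<odot> s) ` hadd R (a' \<odot> u) (s' \<odot> b)"
    using x m b u by (simp add: mult_hadd_distrib)
  finally obtain y' where y': "y' \<in> hadd R (a' \<odot> u) (s' \<odot> b)" "(x \<odot> s') \<odot> y = (x \<odot> s) \<odot> y'"
    by blast
  have y'C: "y' \<in> carrier R" using y' hadd_closed[of "a' \<odot> u" "s' \<odot> b"] m b u by auto
  have "x \<odot> (y \<odot> (s' \<odot> u)) = u \<odot> ((x \<odot> s') \<odot> y)" using x(1) m u yC by (simp add: mult_ac)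
  also have "\<dots> = u \<odot> ((x \<odot> s) \<odot> y')" using y' by simp
  also have "\<dots> = x \<odot> (y' \<odot> (s \<odot> u))" using x(1) m u y'C by (simp add: mult_ac)
  finally have "((y, s \<odot> u), (y', s' \<odot> u)) \<in> locrel R T"
    using x m u yC y'C mult_mem by (intro locrelI) auto
  then show ?thesis using y' by blast
qed

lemma hadd_loc_frac:
  assumes r1: "r1 \<in> carrier R" and t1: "t1 \<in> T" and r2: "r2 \<in> carrier R" and t2: "t2 \<in> T"
  shows "hadd (loc R T) (frac R T r1 t1) (frac R T r2 t2) =
    {frac R T y (t1 \<odot> t2) | y. y \<in> hadd R (r1 \<odot> t2) (t1 \<odot> r2)}"
proof (intro equalityI subsetI)
  fix z assume "z \<in> {frac R T y (t1 \<odot> t2) | y. y \<in> hadd R (r1 \<odot> t2) (t1 \<odot> r2)}"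
  then show "z \<in> hadd (loc R T) (frac R T r1 t1) (frac R T r2 t2)"
    unfolding loc_def using self_in_frac[OF r1 t1] self_in_frac[OF r2 t2] by simp blast
next
  fix z assume "z \<in> hadd (loc R T) (frac R T r1 t1) (frac R T r2 t2)"
  then obtain y a s b u where z: "z = frac R T y (s \<odot> u)" and as: "(a, s) \<in> frac R T r1 t1"
    and bu: "(b, u) \<in> frac R T r2 t2" and y: "y \<in> hadd R (a \<odot> u) (s \<odot> b)"
    unfolding loc_def by auto
  have rel1: "((a, s), (r1, t1)) \<in> locrel R T" and rel2: "((b, u), (r2, t2)) \<in> locrel R T"
    using as bu by (auto intro: locrel_sym locrel_of_mem_frac)
  have m: "a \<in> carrier R" "s \<in> T" "b \<in> carrier R" "u \<in> T"
    using rel1 rel2 unfolding locrel_def by auto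
  obtain y1 where y1: "y1 \<in> hadd R (r1 \<odot> u) (t1 \<odot> b)" "((y, s \<odot> u), (y1, t1 \<odot> u)) \<in> locrel R T"
    using locrel_hadd[OF rel1 m(3,4) y] by blast
  have "y1 \<in> hadd R (b \<odot> t1) (u \<odot> r1)" using y1(1) m r1 t1 by (simp add: hadd_commute mult_ac)
  then obtain y2 where y2: "y2 \<in> hadd R (r2 \<odot> t1) (t2 \<odot> r1)"
    "((y1, u \<odot> t1), (y2, t2 \<odot> t1)) \<in> locrel R T"
    using locrel_hadd[OF rel2 r1 t1] by blast
  have "y2 \<in> hadd R (r1 \<odot> t2) (t1 \<odot> r2)" using y2(1) r2 t2 r1 t1 by (simp add: hadd_commute mult_ac)
  moreover have "((y, s \<odot> u), (y2, t1 \<odot> t2)) \<in> locrel R T"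
    using locrel_trans[OF y1(2)] y2(2) m t1 t2 by (simp add: mult_ac)
  then have "z = frac R T y2 (t1 \<odot> t2)"
    unfolding z using frac_eq_iff unfolding locrel_def by auto
  ultimately show "z \<in> {frac R T y (t1 \<odot> t2) | y. y \<in> hadd R (r1 \<odot> t2) (t1 \<odot> r2)}" by blast
qed

lemma strict_hom_frac_one: "strict_hom R (loc R T) (\<lambda>a. frac R T a (hone R))"
  unfolding strict_hom_def hyperring_hom_def
  using frac_in_carrier_loc hadd_loc_frac hmult_loc_frac one_mem by auto

lemma inj_on_frac_one:
  assumes "T \<subseteq> nzd R"
  shows "inj_on (\<lambda>a. frac R T a (hone R)) (carrier R)"
proof (rule inj_onI)
  fix a b assume ab: "a \<in> carrier R" "b \<in> carrier R"
    and "frac R T a (hone R) = frac R T b (hone R)"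
  then obtain x where "x \<in> T" "x \<odot> (a \<odot> hone R) = x \<odot> (b \<odot> hone R)"
    using frac_eq_iff one_mem unfolding locrel_def by auto
  then show "a = b" using assms ab nzd_mult_cancel[of x a b] by auto
qed

end

context hring
begin

lemma hring_submonoid_nzd: "hring_submonoid R (nzd R)"
  by unfold_locales (auto simp: nzd_carrier one_nzd nzd_mult)

lemma hring_submonoid_powers: "f \<in> carrier R \<Longrightarrow> hring_submonoid R (powers R f)"
  unfolding powers_def
  by unfold_locales (auto simp: hpow_add intro: rangeI range_eqI[of _ _ 0])

end

text \<open>The canonical map T^-1 R \<rightarrow> T'^-1 R for T \<subseteq> T' saturates each class.\<close>

definition loc_extend :: "('a, 'b) hyperring_scheme \<Rightarrow> 'a set \<Rightarrow> ('a \<times> 'a) set \<Rightarrow> ('a \<times> 'a) set" where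
  "loc_extend R T' A = locrel R T' `` A"

locale hring_submonoid_pair = hring_submonoid R T + T': hring_submonoid R T'
  for R :: "('a, 'b) hyperring_scheme" and T T' +
  assumes submonoid_subset: "T \<subseteq> T'"
begin

lemma loc_extend_frac:
  assumes "a \<in> carrier R" "t \<in> T"
  shows "loc_extend R T' (frac R T a t) = frac R T' a t"
proof
  have "locrel R T \<subseteq> locrel R T'" unfolding locrel_def using submonoid_subset by blast
  then show "loc_extend R T' (frac R T a t) \<subseteq> frac R T' a t"
    unfolding loc_extend_def frac_def
    by (auto intro: T'.locrel_trans)
next
  show "frac R T' a t \<subseteq> loc_extend R T' (frac R T a t)"
    unfolding loc_extend_def using self_in_frac[OF assms] unfolding frac_def by blast
qed

lemma strict_hom_loc_extend: "strict_hom (loc R T) (loc R T') (loc_extend R T')"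
  unfolding strict_hom_def hyperring_hom_def
proof (intro conjI ballI)
  fix A B assume "A \<in> carrier (loc R T)" "B \<in> carrier (loc R T)"
  then obtain a s b t where A: "A = frac R T a s" "a \<in> carrier R" "s \<in> T"
    and B: "B = frac R T b t" "b \<in> carrier R" "t \<in> T"
    unfolding carrier_loc by blast
  have T': "s \<in> T'" "t \<in> T'" "s \<odot> t \<in> T" using A B submonoid_subset mult_mem by auto
  have sums: "y \<in> carrier R" if "y \<in> hadd R (a \<odot> t) (s \<odot> b)" for y
    using that hadd_closed[of "a \<odot> t" "s \<odot> b"] A B by auto
  show "loc_extend R T' A \<in> carrier (loc R T')"
    using A T' loc_extend_frac T'.frac_in_carrier_loc by simp
  have "loc_extend R T' ` hadd (loc R T) A B =
      loc_extend R T' ` {frac R T y (s \<odot> t) | y. y \<in> hadd R (a \<odot> t) (s \<odot> b)}"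
    using A B by (simp add: hadd_loc_frac)
  also have "\<dots> = {frac R T' y (s \<odot> t) | y. y \<in> hadd R (a \<odot> t) (s \<odot> b)}"
    using sums T'(3) loc_extend_frac by blast
  also have "\<dots> = hadd (loc R T') (loc_extend R T' A) (loc_extend R T' B)"
    using A B T' by (simp add: T'.hadd_loc_frac loc_extend_frac)
  finally show "loc_extend R T' ` hadd (loc R T) A B = hadd (loc R T') (loc_extend R T' A) (loc_extend R T' B)"
    and "loc_extend R T' ` hadd (loc R T) A B \<subseteq> hadd (loc R T') (loc_extend R T' A) (loc_extend R T' B)"
    by simp_all
  show "loc_extend R T' (hmult (loc R T) A B) =
      hmult (loc R T') (loc_extend R T' A) (loc_extend R T' B)"
    using A B T' by (simp add: hmult_loc_frac T'.hmult_loc_frac loc_extend_frac)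
qed

lemma inj_on_loc_extend:
  assumes "T' \<subseteq> nzd R"
  shows "inj_on (loc_extend R T') (carrier (loc R T))"
proof (rule inj_onI)
  fix A B assume "A \<in> carrier (loc R T)" "B \<in> carrier (loc R T)"
    and eq: "loc_extend R T' A = loc_extend R T' B"
  then obtain a s b t where A: "A = frac R T a s" "a \<in> carrier R" "s \<in> T"
    and B: "B = frac R T b t" "b \<in> carrier R" "t \<in> T"
    unfolding carrier_loc by blast
  have T': "s \<in> T'" "t \<in> T'" using A B submonoid_subset by auto
  have "frac R T' a s = frac R T' b t" using eq A B loc_extend_frac by simp
  then obtain x where "x \<in> T'" "x \<odot> (a \<odot> t) = x \<odot> (b \<odot> s)"
    using T'.frac_eq_iff A B T' unfolding locrel_def by auto
  then have "a \<odot> t = b \<odot> s" using assms A B nzd_mult_cancel[of x] by auto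
  then have "((a, s), (b, t)) \<in> locrel R T" using A B one_mem by (intro locrelI) auto
  then show "A = B" using A B frac_eq_iff by simp
qed

end

lemma strict_hom_restrict_codomain:
  assumes "strict_hom R S \<phi>" "\<phi> ` carrier R \<subseteq> C"
  shows "strict_hom R (S\<lparr>carrier := C\<rparr>) \<phi>"
  using assms unfolding strict_hom_def hyperring_hom_def by auto

lemma strict_hom_inv_into:
  assumes h: "strict_hom R S \<phi>" and b: "bij_betw \<phi> (carrier R) (carrier S)"
    and add_closed: "\<forall>a\<in>carrier R. \<forall>b\<in>carrier R. hadd R a b \<subseteq> carrier R"
    and mult_closed: "\<forall>a\<in>carrier R. \<forall>b\<in>carrier R. hmult R a b \<in> carrier R"
  shows "strict_hom S R (inv_into (carrier R) \<phi>)"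
  unfolding strict_hom_def hyperring_hom_def
proof (intro conjI ballI)
  let ?\<psi> = "inv_into (carrier R) \<phi>"
  have inj: "inj_on \<phi> (carrier R)" and im: "\<phi> ` carrier R = carrier S"
    using b unfolding bij_betw_def by auto
  fix u v assume "u \<in> carrier S" "v \<in> carrier S"
  then obtain a c where a: "a \<in> carrier R" "u = \<phi> a" and c: "c \<in> carrier R" "v = \<phi> c"
    using im by blast
  show "?\<psi> u \<in> carrier R" using a by (simp add: inv_into_f_f[OF inj])
  have "?\<psi> ` hadd S u v = ?\<psi> ` \<phi> ` hadd R a c"
    using h a c unfolding strict_hom_def by simp
  also have "\<dots> = hadd R a c" using inj add_closed a c by (simp add: inv_into_image_cancel)
  finally show "?\<psi> ` hadd S u v = hadd R (?\<psi> u) (?\<psi> v)"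
    and "?\<psi> ` hadd S u v \<subseteq> hadd R (?\<psi> u) (?\<psi> v)"
    using a c inj by simp_all
  show "?\<psi> (hmult S u v) = hmult R (?\<psi> u) (?\<psi> v)"
    using a c inj h mult_closed unfolding strict_hom_def hyperring_hom_def by (metis inv_into_f_f)
qed

context hring
begin

lemma carrier_sections: "carrier (sections R U) = sections_set R U"
  by (simp add: sections_def)

lemma frac_in_sections_set:
  assumes "a \<in> carrier R" "t \<in> nzd R" "\<forall>P\<in>U. t \<notin> P"
  shows "frac R (nzd R) a t \<in> sections_set R U"
  unfolding sections_set_def total_frac_def
  using hring_submonoid.frac_in_carrier_loc[OF hring_submonoid_nzd] assms by blast

lemma strict_hom_into_sections:
  assumes "strict_hom S (total_frac R) \<phi>" "\<phi> ` carrier S \<subseteq> sections_set R U"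
  shows "strict_hom S (sections R U) \<phi>"
  unfolding sections_def by (rule strict_hom_restrict_codomain[OF assms])

lemma strict_hom_frac_one_sections:
  "strict_hom R (sections R (Spec R)) (\<lambda>a. frac R (nzd R) a (hone R))"
proof (rule strict_hom_into_sections)
  show "strict_hom R (total_frac R) (\<lambda>a. frac R (nzd R) a (hone R))"
    unfolding total_frac_def by (rule hring_submonoid.strict_hom_frac_one[OF hring_submonoid_nzd])
  show "(\<lambda>a. frac R (nzd R) a (hone R)) ` carrier R \<subseteq> sections_set R (Spec R)"
    using frac_in_sections_set one_nzd one_notin_prime unfolding Spec_def by auto
qed

lemma loc_at_embeds_into_sections:
  assumes f: "f \<in> nzd R"
  shows "strict_hom (loc_at R f) (sections R (zariski_D R f)) (loc_extend R (nzd R))"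
    and "inj_on (loc_extend R (nzd R)) (carrier (loc_at R f))"
    and "a \<in> carrier R \<Longrightarrow> loc_extend R (nzd R) (frac R (powers R f) a (hpow R f n)) =
           frac R (nzd R) a (hpow R f n)"
proof -
  have fC: "f \<in> carrier R" using f nzd_carrier by blast
  interpret hring_submonoid_pair R "powers R f" "nzd R"
    using hring_submonoid_powers[OF fC] hring_submonoid_nzd powers_subset_nzd[OF f]
    by (simp add: hring_submonoid_pair_def hring_submonoid_pair_axioms_def)
  have pow: "hpow R f n \<in> powers R f" for n unfolding powers_def by blast
  show "a \<in> carrier R \<Longrightarrow> loc_extend R (nzd R) (frac R (powers R f) a (hpow R f n)) =
      frac R (nzd R) a (hpow R f n)"
    using loc_extend_frac pow by blast
  have "frac R (nzd R) a t \<in> sections_set R (zariski_D R f)" if "a \<in> carrier R" "t \<in> powers R f" for a t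
    using that frac_in_sections_set powers_subset_nzd[OF f] hpow_notin_prime[OF _ fC]
    unfolding powers_def zariski_D_def Spec_def by auto
  then have "loc_extend R (nzd R) ` carrier (loc_at R f) \<subseteq> sections_set R (zariski_D R f)"
    unfolding loc_at_def carrier_loc using loc_extend_frac by auto
  then show "strict_hom (loc_at R f) (sections R (zariski_D R f)) (loc_extend R (nzd R))"
    using strict_hom_loc_extend unfolding loc_at_def total_frac_def
    by (intro strict_hom_into_sections) (simp_all add: total_frac_def)
  show "inj_on (loc_extend R (nzd R)) (carrier (loc_at R f))"
    unfolding loc_at_def by (rule inj_on_loc_extend) simp
qed

definition unit :: "'a \<Rightarrow> bool" where
  "unit b \<longleftrightarrow> (\<exists>c\<in>carrier R. b \<odot> c = hone R)"

lemma hyperideal_principal: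
  assumes b: "b \<in> carrier R"
  shows "hyperideal R {b \<odot> r | r. r \<in> carrier R}"
  unfolding hyperideal_def
proof (intro conjI ballI)
  show "{b \<odot> r | r. r \<in> carrier R} \<subseteq> carrier R" using b by auto
  show "{b \<odot> r | r. r \<in> carrier R} \<noteq> {}" using one_closed by blast
  fix x y s assume "x \<in> {b \<odot> r | r. r \<in> carrier R}" "y \<in> {b \<odot> r | r. r \<in> carrier R}"
    and s: "s \<in> carrier R"
  then obtain r1 r2 where r: "r1 \<in> carrier R" "x = b \<odot> r1" "r2 \<in> carrier R" "y = b \<odot> r2"
    by blast
  have "hneg R (s \<odot> y) = b \<odot> hneg R (s \<odot> r2)"
    using r s b by (simp add: mult_left_commute neg_mult_right)
  then have "hadd R x (hneg R (s \<odot> y)) = hmult R b ` hadd R r1 (hneg R (s \<odot> r2))"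
    using r s b by (simp add: mult_hadd_distrib)
  also have "\<dots> \<subseteq> {b \<odot> r | r. r \<in> carrier R}"
    using hadd_closed[of r1 "hneg R (s \<odot> r2)"] r s by auto
  finally show "hadd R x (hneg R (s \<odot> y)) \<subseteq> {b \<odot> r | r. r \<in> carrier R}" .
qed

lemma hyperideal_Union_chain:
  assumes "\<C> \<noteq> {}" and ideals: "\<And>I. I \<in> \<C> \<Longrightarrow> hyperideal R I"
    and chain: "\<And>I J. I \<in> \<C> \<Longrightarrow> J \<in> \<C> \<Longrightarrow> I \<subseteq> J \<or> J \<subseteq> I"
  shows "hyperideal R (\<Union>\<C>)"
  unfolding hyperideal_def
proof (intro conjI ballI)
  show "\<Union>\<C> \<subseteq> carrier R" using ideals unfolding hyperideal_def by blast
  show "\<Union>\<C> \<noteq> {}" using assms(1) ideals hyperideal_zero by blast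
  fix x y r assume "x \<in> \<Union>\<C>" "y \<in> \<Union>\<C>" "r \<in> carrier R"
  then obtain I J where IJ: "I \<in> \<C>" "J \<in> \<C>" "x \<in> I" "y \<in> J" by blast
  then obtain K where "K \<in> \<C>" "x \<in> K" "y \<in> K" using chain[OF IJ(1,2)] by blast
  moreover have "hadd R x (hneg R (r \<odot> y)) \<subseteq> K"
    using calculation ideals[of K] \<open>r \<in> carrier R\<close> unfolding hyperideal_def by blast
  ultimately show "hadd R x (hneg R (r \<odot> y)) \<subseteq> \<Union>\<C>" by blast
qed

lemma nonunit_in_maximal_hyperideal:
  assumes b: "b \<in> carrier R" "\<not> unit b"
  shows "\<exists>M. maximal_hyperideal R M \<and> b \<in> M"
proof -
  define \<A> where "\<A> = {I. hyperideal R I \<and> hone R \<notin> I \<and> b \<in> I}"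
  have "{b \<odot> r | r. r \<in> carrier R} \<in> \<A>"
    unfolding \<A>_def using hyperideal_principal[OF b(1)] b unfolding unit_def
    by (auto intro!: exI[of _ "hone R"])
  then have "\<A> \<noteq> {}" by blast
  moreover have "\<Union>\<C> \<in> \<A>" if "\<C> \<noteq> {}" "subset.chain \<A> \<C>" for \<C>
    using that hyperideal_Union_chain[of \<C>] unfolding \<A>_def subset_chain_def by blast
  ultimately obtain M where M: "M \<in> \<A>" "\<forall>X\<in>\<A>. M \<subseteq> X \<longrightarrow> X = M"
    using subset_Zorn_nonempty by blast
  have "maximal_hyperideal R M"
    unfolding maximal_hyperideal_def
  proof (intro conjI allI impI)
    show "hyperideal R M" "M \<noteq> carrier R" using M(1) one_closed unfolding \<A>_def by auto
    fix J assume J: "hyperideal R J \<and> M \<subseteq> J"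
    show "J = M \<or> J = carrier R"
    proof (cases "hone R \<in> J")
      case True then show ?thesis using hyperideal_one_eq_carrier J by blast
    next
      case False then have "J \<in> \<A>" using J M(1) unfolding \<A>_def by blast
      then show ?thesis using M(2) J by blast
    qed
  qed
  then show ?thesis using M unfolding \<A>_def by blast
qed

lemma unit_notin_maximal_hyperideal:
  assumes M: "maximal_hyperideal R M" and u: "unit u"
  shows "u \<notin> M"
proof
  assume "u \<in> M"
  have I: "hyperideal R M" "M \<noteq> carrier R" using M unfolding maximal_hyperideal_def by auto
  obtain c where c: "c \<in> carrier R" "u \<odot> c = hone R" using u unfolding unit_def by blast
  have "c \<odot> u \<in> M" using hyperideal_mult[OF I(1) \<open>u \<in> M\<close> c(1)] .
  then have "hone R \<in> M" using c \<open>u \<in> M\<close> I unfolding hyperideal_def by (metis mult_commute subsetD)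
  then show False using hyperideal_one_eq_carrier I by blast
qed

lemma unique_maximal_hyperideal_eq_nonunits:
  assumes m: "maximal_hyperideal R m" and unique: "\<And>M. maximal_hyperideal R M \<Longrightarrow> M = m"
  shows "m = {b \<in> carrier R. \<not> unit b}"
proof (intro equalityI subsetI)
  fix b assume "b \<in> m"
  moreover have "hyperideal R m" using m unfolding maximal_hyperideal_def by simp
  ultimately show "b \<in> {b \<in> carrier R. \<not> unit b}"
    using unit_notin_maximal_hyperideal[OF m] unfolding hyperideal_def by auto
next
  fix b assume "b \<in> {b \<in> carrier R. \<not> unit b}"
  then obtain M where "maximal_hyperideal R M" "b \<in> M"
    using nonunit_in_maximal_hyperideal by blast
  then show "b \<in> m" using unique by simp
qed

lemma unit_mult:
  assumes "a \<in> carrier R" "b \<in> carrier R" "unit a" "unit b"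
  shows "unit (a \<odot> b)"
proof -
  obtain c d where cd: "c \<in> carrier R" "a \<odot> c = hone R" "d \<in> carrier R" "b \<odot> d = hone R"
    using assms unfolding unit_def by blast
  have "(a \<odot> b) \<odot> (c \<odot> d) = (a \<odot> c) \<odot> (b \<odot> d)" using assms cd by (simp add: mult_ac)
  then show ?thesis unfolding unit_def using cd by auto
qed

lemma unique_maximal_hyperideal_prime:
  assumes m: "maximal_hyperideal R m" and unique: "\<And>M. maximal_hyperideal R M \<Longrightarrow> M = m"
  shows "prime_hyperideal R m"
proof -
  have nonunits: "m = {b \<in> carrier R. \<not> unit b}"
    by (rule unique_maximal_hyperideal_eq_nonunits[OF m unique])
  have "a \<in> m \<or> b \<in> m" if "a \<in> carrier R" "b \<in> carrier R" "a \<odot> b \<in> m" for a b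
    using that unit_mult[of a b] unfolding nonunits by blast
  moreover have "hyperideal R m" "m \<noteq> carrier R" using m unfolding maximal_hyperideal_def by simp_all
  ultimately show ?thesis unfolding prime_hyperideal_def by blast
qed

text \<open>At the point m every global section has a denominator outside m, which is then a unit.\<close>

lemma sections_Spec_local_eq_image:
  assumes "maximal_hyperideal R m" "\<And>M. maximal_hyperideal R M \<Longrightarrow> M = m"
  shows "carrier (sections R (Spec R)) \<subseteq> (\<lambda>a. frac R (nzd R) a (hone R)) ` carrier R"
proof
  interpret K: hring_submonoid R "nzd R" by (rule hring_submonoid_nzd)
  fix u assume "u \<in> carrier (sections R (Spec R))"
  moreover have "m \<in> Spec R" using unique_maximal_hyperideal_prime[OF assms] unfolding Spec_def by blast
  ultimately obtain a b where ab: "a \<in> carrier R" "b \<in> nzd R" "b \<notin> m" "u = frac R (nzd R) a b"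
    unfolding carrier_sections sections_set_def by blast
  have bC: "b \<in> carrier R" using ab nzd_carrier by blast
  then obtain c where c: "c \<in> carrier R" "b \<odot> c = hone R"
    using ab unique_maximal_hyperideal_eq_nonunits[OF assms] unfolding unit_def by blast
  have "hone R \<odot> (a \<odot> hone R) = hone R \<odot> ((a \<odot> c) \<odot> b)"
    using ab(1) c bC by (simp add: mult_ac)
  then have "u = frac R (nzd R) (a \<odot> c) (hone R)"
    using ab c bC one_nzd by (simp add: K.frac_eq_iff K.locrelI)
  then show "u \<in> (\<lambda>a. frac R (nzd R) a (hone R)) ` carrier R" using ab c by auto
qed

lemma hyperring_iso_if_bij_betw:
  assumes "strict_hom R S \<phi>" "bij_betw \<phi> (carrier R) (carrier S)"
  shows "hyperring_iso R S \<phi>"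
proof -
  have "strict_hom S R (inv_into (carrier R) \<phi>)"
    by (rule strict_hom_inv_into[OF assms]) (simp_all add: hadd_closed)
  then show ?thesis unfolding hyperring_iso_def using assms by blast
qed

end

theorem proposition4p29:
  fixes R :: "'a hyperring"
  assumes "hyperring R"
    and "irreducible_Spec R"
  shows "(\<forall>f\<in>nzd R. \<exists>\<phi>.
            strict_hom (loc_at R f) (sections R (zariski_D R f)) \<phi> \<and>
            inj_on \<phi> (carrier (loc_at R f)) \<and>
            (\<forall>a\<in>carrier R. \<forall>n. \<phi> (frac R (powers R f) a (hpow R f n)) = frac R (nzd R) a (hpow R f n)))
       \<and> (\<exists>\<phi>. strict_hom R (sections R (Spec R)) \<phi> \<and> inj_on \<phi> (carrier R) \<and>
            (\<forall>a\<in>carrier R. \<phi> a = frac R (nzd R) a (hone R)))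
       \<and> ((\<exists>!M. maximal_hyperideal R M) \<longrightarrow> (\<exists>\<phi>. hyperring_iso R (sections R (Spec R)) \<phi>))"
proof -
  interpret hring R by (rule hring_if_hyperring) (rule assms(1))
  interpret K: hring_submonoid R "nzd R" by (rule hring_submonoid_nzd)
  let ?\<iota> = "\<lambda>a. frac R (nzd R) a (hone R)"
  have \<iota>: "strict_hom R (sections R (Spec R)) ?\<iota>" "inj_on ?\<iota> (carrier R)"
    using strict_hom_frac_one_sections K.inj_on_frac_one by simp_all
  have iso: "hyperring_iso R (sections R (Spec R)) ?\<iota>" if "\<exists>!M. maximal_hyperideal R M"
  proof (rule hyperring_iso_if_bij_betw[OF \<iota>(1)])
    from that obtain m where "maximal_hyperideal R m" "\<And>M. maximal_hyperideal R M \<Longrightarrow> M = m"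
      by blast
    then have "carrier (sections R (Spec R)) \<subseteq> ?\<iota> ` carrier R"
      by (rule sections_Spec_local_eq_image)
    moreover have "?\<iota> ` carrier R \<subseteq> carrier (sections R (Spec R))"
      using \<iota>(1) unfolding strict_hom_def hyperring_hom_def by blast
    ultimately show "bij_betw ?\<iota> (carrier R) (carrier (sections R (Spec R)))"
      using \<iota>(2) unfolding bij_betw_def by blast
  qed
  show ?thesis
    apply (intro conjI ballI impI)
    subgoal for f
      using loc_at_embeds_into_sections[of f] by (intro exI[of _ "loc_extend R (nzd R)"]) simp
    subgoal using \<iota> by (intro exI[of _ ?\<iota>]) simp
    using iso by blast
qed

end
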